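(* Let $\Omega=(a,b)$ be a bounded interval, $\lambda\ge0$, $0\le q<\gamma\le1$, let $u\in C^1(\Omega)$ with $u(a)=0$, and let $v\in C_0^\infty(\Omega)$. Then $$\left({}_a\mathbb{D}_x^{\gamma,\lambda}u,\ v\right)=\left({}_a\mathbb{D}_x^{q,\lambda}u,\ {}_x\mathbb{D}_b^{\gamma-q,\lambda}v\right),$$ where $(\cdot,\cdot)$ is the $L^2(\Omega)$ inner product.
   Context: For $n-1\le\mu<n$ ($n$ a positive integer) and $\lambda\ge0$, ${}_a\mathbb{D}_x^{\mu,\lambda}u(x)=\frac{e^{-\lambda x}}{\Gamma(n-\mu)}\frac{d^n}{dx^n}\int_a^x\frac{e^{\lambda\xi}u(\xi)}{(x-\xi)^{\mu-n+1}}d\xi$ and ${}_x\mathbb{D}_b^{\mu,\lambda}u(x)=\frac{(-1)^ne^{\lambda x}}{\Gamma(n-\mu)}\frac{d^n}{dx^n}\int_x^b\frac{e^{-\lambda\xi}u(\xi)}{(\xi-x)^{\mu-n+1}}d\xi$ (for order $0$ these reduce to the identity; for order $1$ to $\frac{d}{dx}+\lambda$ and $-(\frac{d}{dx}-\lambda)$ respectively). *)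

theory Defs
  imports "HOL-Analysis.Analysis"
begin

definition tfd_n :: "real \<Rightarrow> nat" where
  "tfd_n mu = nat \<lfloor>mu\<rfloor> + 1"

definition left_tfd :: "real \<Rightarrow> real \<Rightarrow> real \<Rightarrow> (real \<Rightarrow> real) \<Rightarrow> real \<Rightarrow> real" where
  "left_tfd a mu lam u x =
     (let n = tfd_n mu in
      exp (- lam * x) / Gamma (real n - mu) *
      (deriv ^^ n)
        (\<lambda>y. integral {a..y} (\<lambda>\<xi>. exp (lam * \<xi>) * u \<xi> / (y - \<xi>) powr (mu - real n + 1))) x)"

definition right_tfd :: "real \<Rightarrow> real \<Rightarrow> real \<Rightarrow> (real \<Rightarrow> real) \<Rightarrow> real \<Rightarrow> real" where
  "right_tfd b mu lam u x =
     (let n = tfd_n mu in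
      (-1) ^ n * exp (lam * x) / Gamma (real n - mu) *
      (deriv ^^ n)
        (\<lambda>y. integral {y..b} (\<lambda>\<xi>. exp (- lam * \<xi>) * u \<xi> / (\<xi> - y) powr (mu - real n + 1))) x)"

definition L2_inner :: "real \<Rightarrow> real \<Rightarrow> (real \<Rightarrow> real) \<Rightarrow> (real \<Rightarrow> real) \<Rightarrow> real" where
  "L2_inner a b f g = integral {a..b} (\<lambda>x. f x * g x)"

definition C1_on_interval :: "real \<Rightarrow> real \<Rightarrow> (real \<Rightarrow> real) \<Rightarrow> bool" where
  "C1_on_interval a b u \<longleftrightarrow>
     (\<exists>u'. continuous_on {a..b} u' \<and>
           (\<forall>x\<in>{a..b}. (u has_real_derivative u' x) (at x within {a..b})))"

definition C0_inf :: "real \<Rightarrow> real \<Rightarrow> (real \<Rightarrow> real) \<Rightarrow> bool" where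
  "C0_inf a b v \<longleftrightarrow>
     (\<forall>k x. (deriv ^^ k) v differentiable (at x)) \<and>
     (\<exists>c d. a < c \<and> c \<le> d \<and> d < b \<and> (\<forall>x. x \<notin> {c..d} \<longrightarrow> v x = 0))"

end

theory Submission
  imports Defs
begin

text \<open>Put \<open>w(x) = e^(\<lambda>x) u(x)\<close> and \<open>z(x) = e^(-\<lambda>x) v(x)\<close>. Below order one both tempered
  derivatives are, up to factors \<open>e^(\<plusminus>\<lambda>x) / \<Gamma>\<close> that cancel in the inner products, derivatives of
  Riemann--Liouville integrals of \<open>w\<close> and \<open>z\<close>. Integration by parts (\<open>w(a) = 0\<close>, \<open>z\<close> vanishes
  near \<open>b\<close>) and Fubini on the triangle \<open>a \<le> s \<le> t \<le> b\<close> turn the left-hand side into a multiple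
  of \<open>\<integral> w \<cdot> I^(1-\<gamma>) z'\<close> and the right-hand side into a multiple of
  \<open>\<integral> w \<cdot> I^(1-q) I^(1-\<gamma>+q) z''\<close>, where \<open>I^\<alpha>\<close> is the right Riemann--Liouville integral at \<open>b\<close>.
  The Beta integral gives the semigroup law \<open>I^(1-q) I^(1-\<gamma>+q) = B(1-q, 1-\<gamma>+q) I^(2-\<gamma>)\<close>, one
  more integration by parts gives \<open>I^(2-\<gamma>) z'' = -(1-\<gamma>) I^(1-\<gamma>) z'\<close>, and the constants match
  because \<open>B(x, y) = \<Gamma>(x) \<Gamma>(y) / \<Gamma>(x + y)\<close> and \<open>\<Gamma>(2-\<gamma>) = (1-\<gamma>) \<Gamma>(1-\<gamma>)\<close>. The regularity
  needed for the integrations by parts comes from substitutions that remove the weak singularity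
  of the kernel.\<close>

text \<open>Riemann--Liouville integrals of order \<open>1 - e\<close>, without the factor \<open>1/\<Gamma>(1 - e)\<close>.\<close>

definition left_frac_integral :: "real \<Rightarrow> real \<Rightarrow> (real \<Rightarrow> real) \<Rightarrow> real \<Rightarrow> real" where
  "left_frac_integral a e f y = integral {a..y} (\<lambda>\<xi>. f \<xi> * (y - \<xi>) powr (- e))"

definition right_frac_integral :: "real \<Rightarrow> real \<Rightarrow> (real \<Rightarrow> real) \<Rightarrow> real \<Rightarrow> real" where
  "right_frac_integral b e f y = integral {y..b} (\<lambda>t. f t * (t - y) powr (- e))"

lemma left_frac_integral_at_left: "left_frac_integral a e f a = 0"
  by (simp add: left_frac_integral_def)

lemma right_frac_integral_at_right: "right_frac_integral b e f b = 0"
  by (simp add: right_frac_integral_def)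

section \<open>Fubini for the power kernel and the semigroup law\<close>

lemma has_integral_powr_kernel:
  fixes s b e :: real
  assumes "s \<le> b" "0 \<le> e" "e < 1"
  shows "((\<lambda>t. (t - s) powr (- e)) has_integral (b - s) powr (1 - e) / (1 - e)) {s..b}"
proof -
  let ?F = "\<lambda>t. (t - s) powr (1 - e) / (1 - e)"
  have "((\<lambda>t. (t - s) powr (- e)) has_integral ?F b - ?F s) {s..b}"
  proof (rule fundamental_theorem_of_calculus_interior)
    show "continuous_on {s..b} ?F"
      using assms by (intro continuous_intros continuous_on_powr') auto
    fix x assume "x \<in> {s<..<b}"
    then have "(?F has_real_derivative (1 - e) * (x - s) powr (1 - e - 1) * 1 / (1 - e)) (at x)"
      by (auto intro!: derivative_eq_intros)
    then show "(?F has_vector_derivative (x - s) powr (- e)) (at x)"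
      using assms by (simp add: has_real_derivative_iff_has_vector_derivative)
  qed (use assms in auto)
  then show ?thesis by simp
qed

lemma set_integrable_powr_kernel:
  fixes s b e :: real
  assumes "0 \<le> e" "e < 1"
  shows "set_integrable lborel {s..b} (\<lambda>t. (t - s) powr (- e))"
proof (cases "s \<le> b")
  case True
  have "(\<lambda>t. (t - s) powr (- e)) absolutely_integrable_on {s..b}"
    using has_integral_powr_kernel[OF True assms] by (intro nonnegative_absolutely_integrable_1) auto
  then show ?thesis
    unfolding set_integrable_def absolutely_integrable_on_def
    by (subst (asm) integrable_completion) auto
qed (simp add: set_integrable_def)

lemma lebesgue_integral_powr_kernel:
  fixes s b e :: real
  assumes "s \<le> b" "0 \<le> e" "e < 1"
  shows "(LINT t|lborel. indicator {s..b} t * (t - s) powr (- e)) = (b - s) powr (1 - e) / (1 - e)"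
  using set_borel_integral_eq_integral(2)[OF set_integrable_powr_kernel[OF assms(2,3)]]
    integral_unique[OF has_integral_powr_kernel[OF assms]]
  by (simp add: set_lebesgue_integral_def)

lemma set_integrable_continuous_mult_powr_kernel:
  fixes B :: "real \<Rightarrow> real"
  assumes "0 \<le> e" "e < 1" and B: "continuous_on UNIV B"
  shows "set_integrable lborel {s..b} (\<lambda>t. B t * (t - s) powr (- e))"
proof -
  have "bounded (B ` {s..b})"
    by (intro compact_imp_bounded compact_continuous_image continuous_on_subset[OF B]) auto
  then obtain M where M: "\<And>t. t \<in> {s..b} \<Longrightarrow> \<bar>B t\<bar> \<le> M"
    by (metis bounded_iff imageI real_norm_def)
  have [measurable]: "B \<in> borel_measurable borel"
    using B by (rule borel_measurable_continuous_onI)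
  show ?thesis
  proof (rule set_integrable_bound[where f="\<lambda>t. M * (t - s) powr (- e)"])
    show "set_integrable lborel {s..b} (\<lambda>t. M * (t - s) powr (- e))"
      using set_integrable_powr_kernel[OF assms(1,2)] by (rule set_integrable_mult_right)
    show "set_borel_measurable lborel {s..b} (\<lambda>t. B t * (t - s) powr (- e))"
      unfolding set_borel_measurable_def by measurable
    show "AE t in lborel. t \<in> {s..b} \<longrightarrow> norm (B t * (t - s) powr (- e)) \<le> norm (M * (t - s) powr (- e))"
      using M by (intro AE_I2) (auto simp: abs_mult intro!: mult_right_mono order_trans[OF _ abs_ge_self])
  qed
qed

lemma lebesgue_integral_abs_mult_powr_kernel_le:
  fixes B :: "real \<Rightarrow> real"
  assumes e: "0 \<le> e" "e < 1" and B: "continuous_on UNIV B" and s: "s \<le> b"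
    and M: "\<And>t. t \<in> {s..b} \<Longrightarrow> \<bar>B t\<bar> \<le> M"
  shows "(LINT t|lborel. \<bar>indicator {s..b} t * (B t * (t - s) powr (- e))\<bar>) \<le> M * ((b - s) powr (1 - e) / (1 - e))"
proof -
  have "(LINT t|lborel. \<bar>indicator {s..b} t * (B t * (t - s) powr (- e))\<bar>)
        \<le> (LINT t|lborel. M * (indicator {s..b} t * (t - s) powr (- e)))"
  proof (rule integral_mono)
    show "integrable lborel (\<lambda>t. \<bar>indicator {s..b} t * (B t * (t - s) powr (- e))\<bar>)"
      using set_integrable_continuous_mult_powr_kernel[OF e B] by (simp add: set_integrable_def)
    show "integrable lborel (\<lambda>t. M * (indicator {s..b} t * (t - s) powr (- e)))"
      using set_integrable_powr_kernel[OF e] by (simp add: set_integrable_def)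
    show "\<bar>indicator {s..b} t * (B t * (t - s) powr (- e))\<bar> \<le> M * (indicator {s..b} t * (t - s) powr (- e))" for t
      using M[of t] by (auto simp: indicator_def abs_mult intro!: mult_right_mono)
  qed
  then show ?thesis
    using e s by (simp add: lebesgue_integral_powr_kernel)
qed

lemma borel_measurable_triangle_powr_kernel:
  fixes A B :: "real \<Rightarrow> real"
  assumes [measurable]: "A \<in> borel_measurable borel" "B \<in> borel_measurable borel"
  shows "(\<lambda>(s, t). indicator {a..b} s * A s * (indicator {s..b} t * (B t * (t - s) powr (- e))))
           \<in> borel_measurable (lborel \<Otimes>\<^sub>M lborel)"
proof -
  have "(\<lambda>(s, t). indicator {a..b} s * A s * (indicator {s..b} t * (B t * (t - s) powr (- e)))) =
        (\<lambda>(s, t). if a \<le> s \<and> s \<le> t \<and> t \<le> b then A s * B t * (t - s) powr (- e) else 0)"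
    by (auto simp: fun_eq_iff indicator_def)
  also have "\<dots> \<in> borel_measurable (lborel \<Otimes>\<^sub>M lborel)"
    by measurable
  finally show ?thesis .
qed

lemma integrable_triangle_powr_kernel:
  fixes A B :: "real \<Rightarrow> real"
  assumes e: "0 \<le> e" "e < 1"
    and A [measurable]: "A \<in> borel_measurable borel" and A_int: "set_integrable lborel {a..b} A"
    and B: "continuous_on UNIV B"
  shows "integrable (lborel \<Otimes>\<^sub>M lborel)
           (\<lambda>(s, t). indicator {a..b} s * A s * (indicator {s..b} t * (B t * (t - s) powr (- e))))"
    (is "integrable _ (\<lambda>(s, t). ?F s t)")
proof -
  have [measurable]: "B \<in> borel_measurable borel"
    using B by (rule borel_measurable_continuous_onI)
  have "bounded (B ` {a..b})"
    by (intro compact_imp_bounded compact_continuous_image continuous_on_subset[OF B]) auto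
  then obtain M where M: "\<And>t. t \<in> {a..b} \<Longrightarrow> \<bar>B t\<bar> \<le> M"
    by (metis bounded_iff imageI real_norm_def)
  define C where "C = \<bar>M\<bar> * ((b - a) powr (1 - e) / (1 - e))"
  have inner_int: "integrable lborel (\<lambda>t. ?F s t)" for s
    using set_integrable_continuous_mult_powr_kernel[OF e B, of s b]
    by (cases "s \<in> {a..b}") (auto simp: set_integrable_def)
  have bound: "norm (LINT t|lborel. norm (?F s t)) \<le> norm (indicator {a..b} s * \<bar>A s\<bar> * C)" for s
  proof (cases "s \<in> {a..b}")
    case s: True
    have "(LINT t|lborel. norm (?F s t)) =
          \<bar>A s\<bar> * (LINT t|lborel. \<bar>indicator {s..b} t * (B t * (t - s) powr (- e))\<bar>)"
      using s by (simp add: abs_mult)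
    also have "\<dots> \<le> \<bar>A s\<bar> * (\<bar>M\<bar> * ((b - s) powr (1 - e) / (1 - e)))"
      using s M by (intro mult_left_mono lebesgue_integral_abs_mult_powr_kernel_le[OF e B])
                   (auto intro: order_trans[OF _ abs_ge_self])
    also have "\<dots> \<le> \<bar>A s\<bar> * C"
      using s e by (auto simp: C_def intro!: mult_left_mono divide_right_mono powr_mono2)
    finally show ?thesis
      using s e by (simp add: C_def)
  qed simp
  have F_meas: "(\<lambda>(s, t). ?F s t) \<in> borel_measurable (lborel \<Otimes>\<^sub>M lborel)"
    by (rule borel_measurable_triangle_powr_kernel) measurable
  have "integrable lborel (\<lambda>s. LINT t|lborel. norm (?F s t))"
  proof (rule Bochner_Integration.integrable_bound[OF _ _ AE_I2[OF bound]])
    show "integrable lborel (\<lambda>s. indicator {a..b} s * \<bar>A s\<bar> * C)"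
      using integrable_abs[OF A_int[unfolded set_integrable_def]] by (simp add: abs_mult)
    show "(\<lambda>s. LINT t|lborel. norm (?F s t)) \<in> borel_measurable lborel"
      using F_meas by (intro lborel.borel_measurable_lebesgue_integral) (simp add: case_prod_beta)
  qed
  then show ?thesis
    using lborel_pair.Fubini_integrable[OF F_meas] inner_int by simp
qed

lemma integral_Icc_eq_lebesgue_integral:
  fixes g h :: "real \<Rightarrow> real"
  assumes g: "integrable lborel g" and outside: "\<And>x. x \<notin> {a..b} \<Longrightarrow> g x = 0"
    and ae: "AE x in lborel. x \<in> {a..b} \<longrightarrow> g x = h x"
  shows "integral {a..b} h = (LINT x|lborel. g x)"
proof -
  have g_eq: "indicator {a..b} x * g x = g x" for x
    using outside by (cases "x \<in> {a..b}") auto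
  have g_set: "set_integrable lborel {a..b} g"
    using g by (simp add: set_integrable_def g_eq)
  have "integral {a..b} g = (LINT x|lborel. g x)"
    using set_borel_integral_eq_integral(2)[OF g_set] by (simp add: set_lebesgue_integral_def g_eq)
  moreover obtain N where N: "N \<in> null_sets lborel" "{x \<in> space lborel. \<not> (x \<in> {a..b} \<longrightarrow> g x = h x)} \<subseteq> N"
    using ae[unfolded eventually_ae_filter] by blast
  have "integral {a..b} h = integral {a..b} g"
  proof (rule integral_spike)
    show "negligible N"
      using N(1) by (simp add: negligible_iff_null_sets null_sets_completionI)
  qed (use N(2) in auto)
  ultimately show ?thesis by simp
qed

lemma lebesgue_integral_mult_left_powr_kernel:
  fixes A :: "real \<Rightarrow> real"
  assumes "integrable lborel (\<lambda>s. c * (indicator {a..t} s * (A s * (t - s) powr (- e))))"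
  shows "(LINT s|lborel. c * (indicator {a..t} s * (A s * (t - s) powr (- e)))) = c * left_frac_integral a e A t"
proof (cases "c = 0")
  case False
  have "integrable lborel (\<lambda>s. inverse c * (c * (indicator {a..t} s * (A s * (t - s) powr (- e)))))"
    using assms by (rule integrable_mult_right)
  then have "set_integrable lborel {a..t} (\<lambda>s. A s * (t - s) powr (- e))"
    using False by (simp add: set_integrable_def)
  from set_borel_integral_eq_integral(2)[OF this] show ?thesis
    by (simp add: set_lebesgue_integral_def left_frac_integral_def)
qed simp

lemma integral_mult_right_frac_integral_swap:
  fixes A B :: "real \<Rightarrow> real"
  assumes e: "0 \<le> e" "e < 1"
    and A: "A \<in> borel_measurable borel" "set_integrable lborel {a..b} A"
    and B: "continuous_on UNIV B"
  shows "integral {a..b} (\<lambda>s. A s * right_frac_integral b e B s) =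
         integral {a..b} (\<lambda>t. B t * left_frac_integral a e A t)"
proof -
  define F where "F s t = indicator {a..b} s * A s * (indicator {s..b} t * (B t * (t - s) powr (- e)))"
    for s t
  have F_int: "integrable (lborel \<Otimes>\<^sub>M lborel) (\<lambda>(s, t). F s t)"
    unfolding F_def using integrable_triangle_powr_kernel[OF e A B] .
  have F_zero: "F s t = 0" if "s \<notin> {a..b} \<or> t \<notin> {a..b}" for s t
    using that by (auto simp: F_def indicator_def)
  have "integral {a..b} (\<lambda>s. A s * right_frac_integral b e B s) = (LINT s|lborel. LINT t|lborel. F s t)"
  proof (rule integral_Icc_eq_lebesgue_integral)
    show "integrable lborel (\<lambda>s. LINT t|lborel. F s t)"
      using lborel_pair.integrable_fst[OF F_int] by simp
    have "(LINT t|lborel. F s t) = A s * right_frac_integral b e B s" if "s \<in> {a..b}" for s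
      using that set_borel_integral_eq_integral(2)[OF set_integrable_continuous_mult_powr_kernel[OF e B]]
      by (simp add: F_def set_lebesgue_integral_def right_frac_integral_def)
    then show "AE s in lborel. s \<in> {a..b} \<longrightarrow> (LINT t|lborel. F s t) = A s * right_frac_integral b e B s"
      by simp
  qed (simp add: F_zero)
  also have "\<dots> = (LINT t|lborel. LINT s|lborel. F s t)"
    using lborel_pair.Fubini_integral[OF F_int] by simp
  also have "\<dots> = integral {a..b} (\<lambda>t. B t * left_frac_integral a e A t)"
  proof (rule integral_Icc_eq_lebesgue_integral[symmetric])
    show "integrable lborel (\<lambda>t. LINT s|lborel. F s t)"
      using lborel_pair.integrable_snd[OF F_int] by simp
    show "AE t in lborel. t \<in> {a..b} \<longrightarrow> (LINT s|lborel. F s t) = B t * left_frac_integral a e A t"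
      using lborel_pair.AE_integrable_snd[OF F_int]
    proof eventually_elim
      case (elim t)
      show ?case
      proof
        assume "t \<in> {a..b}"
        then have F_t: "(\<lambda>s. F s t) = (\<lambda>s. B t * (indicator {a..t} s * (A s * (t - s) powr (- e))))"
          by (auto simp: F_def indicator_def)
        show "(LINT s|lborel. F s t) = B t * left_frac_integral a e A t"
          using elim unfolding F_t by (rule lebesgue_integral_mult_left_powr_kernel)
      qed
    qed
  qed (simp add: F_zero)
  finally show ?thesis .
qed

lemma integral_mult_right_frac_integral_swap_continuous:
  fixes A B :: "real \<Rightarrow> real"
  assumes e: "0 \<le> e" "e < 1" and ab: "a \<le> b"
    and A: "continuous_on {a..b} A" and B: "continuous_on {a..b} B"
  shows "integral {a..b} (\<lambda>s. A s * right_frac_integral b e B s) =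
         integral {a..b} (\<lambda>t. B t * left_frac_integral a e A t)"
proof -
  define clamp where "clamp t = max a (min b t)" for t
  have clamp: "continuous_on UNIV clamp" "range clamp \<subseteq> {a..b}" "\<And>t. t \<in> {a..b} \<Longrightarrow> clamp t = t"
    using ab by (auto simp: clamp_def intro!: continuous_intros)
  have A': "continuous_on UNIV (A \<circ> clamp)" and B': "continuous_on UNIV (B \<circ> clamp)"
    using continuous_on_compose2[OF A clamp(1,2)] continuous_on_compose2[OF B clamp(1,2)]
    by (simp_all add: o_def)
  have A'_int: "set_integrable lborel {a..b} (A \<circ> clamp)"
    unfolding set_integrable_def
    by (rule borel_integrable_compact) (use continuous_on_subset[OF A'] in auto)
  have right_eq: "right_frac_integral b e (B \<circ> clamp) s = right_frac_integral b e B s"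
    if "s \<in> {a..b}" for s
    unfolding right_frac_integral_def using that clamp(3) by (intro integral_cong) auto
  have left_eq: "left_frac_integral a e (A \<circ> clamp) t = left_frac_integral a e A t"
    if "t \<in> {a..b}" for t
    unfolding left_frac_integral_def using that clamp(3) by (intro integral_cong) auto
  have "integral {a..b} (\<lambda>s. A s * right_frac_integral b e B s) =
        integral {a..b} (\<lambda>s. (A \<circ> clamp) s * right_frac_integral b e (B \<circ> clamp) s)"
    using clamp(3) right_eq by (intro integral_cong) simp
  also have "\<dots> = integral {a..b} (\<lambda>t. (B \<circ> clamp) t * left_frac_integral a e (A \<circ> clamp) t)"
    using A'_int by (intro integral_mult_right_frac_integral_swap e B' borel_measurable_continuous_onI A')
  also have "\<dots> = integral {a..b} (\<lambda>t. B t * left_frac_integral a e A t)"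
    using clamp(3) left_eq by (intro integral_cong) simp
  finally show ?thesis .
qed

lemma left_frac_integral_powr:
  fixes s t q \<beta> :: real
  assumes st: "s \<le> t" and q: "0 \<le> q" "q < 1" and \<beta>: "0 \<le> \<beta>" "\<beta> < 1"
  shows "left_frac_integral s \<beta> (\<lambda>x. (x - s) powr (- q)) t = Beta (1 - q) (1 - \<beta>) * (t - s) powr (1 - q - \<beta>)"
proof (cases "s = t")
  case False
  with st have st': "s < t" by simp
  define f where "f \<tau> = \<tau> powr (- q) * (1 - \<tau>) powr (- \<beta>)" for \<tau> :: real
  define m where "m = 1 / (t - s)"
  define c where "c = - s / (t - s)"
  have m: "m > 0" using st' by (simp add: m_def)
  have "(f has_integral Beta (1 - q) (1 - \<beta>)) (cbox 0 1)"
    using has_integral_Beta_real[of "1 - q" "1 - \<beta>"] q \<beta> unfolding f_def[abs_def] by simp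
  from has_integral_affinity'[OF this m, of c]
  have "((\<lambda>x. f (m * x + c)) has_integral Beta (1 - q) (1 - \<beta>) /\<^sub>R m)
          {(0 - c) /\<^sub>R m..(1 - c) /\<^sub>R m}"
    by simp
  moreover have "(0 - c) /\<^sub>R m = s" "(1 - c) /\<^sub>R m = t"
    using st' by (simp_all add: m_def c_def field_simps)
  ultimately have affine: "((\<lambda>x. f (m * x + c)) has_integral Beta (1 - q) (1 - \<beta>) * (t - s)) {s..t}"
    by (simp add: m_def mult.commute)
  define K where "K = (t - s) powr (- q) * (t - s) powr (- \<beta>)"
  have "(x - s) powr (- q) * (t - x) powr (- \<beta>) = K * f (m * x + c)" if x: "x \<in> {s..t}" for x
  proof -
    have affine_eq: "m * x + c = (x - s) / (t - s)"
      by (simp add: m_def c_def diff_divide_distrib)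
    have reflect_eq: "1 - (x - s) / (t - s) = (t - x) / (t - s)"
      using st' by (simp add: field_simps)
    have "f (m * x + c) = ((x - s) / (t - s)) powr (- q) * ((t - x) / (t - s)) powr (- \<beta>)"
      unfolding f_def reflect_eq[symmetric] affine_eq ..
    also have "\<dots> = ((x - s) powr (- q) / (t - s) powr (- q)) * ((t - x) powr (- \<beta>) / (t - s) powr (- \<beta>))"
      using x st' by (simp add: powr_divide)
    finally show ?thesis unfolding K_def using st' by (simp add: field_simps)
  qed
  then have "((\<lambda>x. (x - s) powr (- q) * (t - x) powr (- \<beta>)) has_integral K * (Beta (1 - q) (1 - \<beta>) * (t - s))) {s..t}"
    using has_integral_mult_right[OF affine, of K] by (subst has_integral_cong) auto
  moreover have "K * (Beta (1 - q) (1 - \<beta>) * (t - s)) = Beta (1 - q) (1 - \<beta>) * (t - s) powr (1 - q - \<beta>)"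
  proof -
    have "(t - s) powr (1 - q - \<beta>) = (t - s) powr 1 * ((t - s) powr (- q) * (t - s) powr (- \<beta>))"
      unfolding powr_add[symmetric] by (simp add: algebra_simps)
    then show ?thesis
      using st' by (simp add: K_def)
  qed
  ultimately show ?thesis
    unfolding left_frac_integral_def by (simp add: integral_unique)
qed (simp add: left_frac_integral_def)

lemma right_frac_integral_semigroup:
  fixes \<phi> :: "real \<Rightarrow> real"
  assumes q: "0 \<le> q" "q < 1" and \<beta>: "0 \<le> \<beta>" "\<beta> < 1" and \<phi>: "continuous_on UNIV \<phi>"
  shows "right_frac_integral b q (right_frac_integral b \<beta> \<phi>) s =
         Beta (1 - q) (1 - \<beta>) * right_frac_integral b (q + \<beta> - 1) \<phi> s"
proof -
  have "right_frac_integral b q (right_frac_integral b \<beta> \<phi>) s =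
        integral {s..b} (\<lambda>x. (x - s) powr (- q) * right_frac_integral b \<beta> \<phi> x)"
    by (simp add: right_frac_integral_def mult.commute)
  also have "\<dots> = integral {s..b} (\<lambda>t. \<phi> t * left_frac_integral s \<beta> (\<lambda>x. (x - s) powr (- q)) t)"
    by (rule integral_mult_right_frac_integral_swap[OF \<beta> _ set_integrable_powr_kernel[OF q] \<phi>]) measurable
  also have "\<dots> = integral {s..b} (\<lambda>t. Beta (1 - q) (1 - \<beta>) * (\<phi> t * (t - s) powr (1 - q - \<beta>)))"
    by (rule integral_cong) (simp add: left_frac_integral_powr q \<beta>)
  also have "1 - q - \<beta> = - (q + \<beta> - 1)"
    by simp
  finally show ?thesis
    by (simp add: right_frac_integral_def)
qed

lemma Beta_div_Gamma_Gamma: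
  fixes q \<beta> :: real
  assumes "0 \<le> q" "q < 1" "0 \<le> \<beta>" "\<beta> < 1"
  shows "Beta (1 - q) (1 - \<beta>) / (Gamma (1 - q) * Gamma (1 - \<beta>)) = 1 / Gamma (2 - q - \<beta>)"
proof -
  have "Gamma (1 - q) > 0" "Gamma (1 - \<beta>) > 0"
    using assms by (simp_all add: Gamma_real_pos)
  moreover have sum: "(1 - q) + (1 - \<beta>) = 2 - q - \<beta>"
    by simp
  ultimately show ?thesis
    unfolding Beta_def sum by simp
qed

lemma Gamma_two_minus:
  fixes \<gamma> :: real
  assumes "\<gamma> < 1"
  shows "Gamma (2 - \<gamma>) = (1 - \<gamma>) * Gamma (1 - \<gamma>)"
proof -
  have "1 - \<gamma> \<notin> \<int>\<^sub>\<le>\<^sub>0"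
    using assms by (auto elim!: nonpos_Ints_cases)
  moreover have "2 - \<gamma> = (1 - \<gamma>) + 1"
    by simp
  ultimately show ?thesis
    using Gamma_plus1 by metis
qed

section \<open>Regularity of the fractional integrals\<close>

text \<open>The substitution \<open>r = (t - x) powr (1 - e)\<close> turns the integral of \<open>\<phi> t * (t - x) powr (- e)\<close>
  over \<open>{x..x + L}\<close> into an integral with a smooth integrand and bounds independent of \<open>x\<close>, which
  can be differentiated under the integral sign.\<close>

definition desingularised_right_integral :: "real \<Rightarrow> real \<Rightarrow> (real \<Rightarrow> real) \<Rightarrow> real \<Rightarrow> real" where
  "desingularised_right_integral L e \<phi> x =
     integral {0..L powr (1 - e)} (\<lambda>r. \<phi> (x + r powr (1 / (1 - e)))) / (1 - e)"

lemma has_integral_desingularised_right_integral: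
  fixes \<phi> :: "real \<Rightarrow> real"
  assumes L: "0 \<le> L" and e: "0 \<le> e" "e < 1" and \<phi>: "continuous_on UNIV \<phi>"
  shows "((\<lambda>t. \<phi> t * (t - x) powr (- e)) has_integral desingularised_right_integral L e \<phi> x) {x..x + L}"
proof -
  define p where "p = 1 / (1 - e)"
  have p: "p \<ge> 1" "(1 - e) * p = 1" using e by (auto simp: p_def field_simps)
  define g where "g t = (t - x) powr (1 - e)" for t
  define \<phi>' where "\<phi>' r = \<phi> (x + r powr p)" for r
  have g_ends: "g x = 0" "g (x + L) = L powr (1 - e)"
    by (simp_all add: g_def)
  have g_deriv: "(g has_real_derivative (1 - e) * (t - x) powr (- e)) (at t within {x..x + L})"
    if "t \<in> {x..x + L} - {x}" for t
  proof -
    have "(g has_real_derivative (1 - e) * (t - x) powr (1 - e - of_nat 1) * 1) (at t)"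
      unfolding g_def using that by (intro DERIV_fun_powr derivative_eq_intros) auto
    then show ?thesis by (simp add: has_field_derivative_at_within)
  qed
  have "((\<lambda>t. ((1 - e) * (t - x) powr (- e)) *\<^sub>R \<phi>' (g t)) has_integral integral {g x..g (x + L)} \<phi>') {x..x + L}"
  proof (rule has_integral_substitution_strong[of "{x}", OF _ _ _ _ _ _ g_deriv])
    show "continuous_on {g x..g (x + L)} \<phi>'"
      unfolding \<phi>'_def
      by (rule continuous_on_compose2[OF \<phi>]) (use p in \<open>auto simp: g_ends intro!: continuous_intros continuous_on_powr'\<close>)
    show "g ` {x..x + L} \<subseteq> {g x..g (x + L)}"
      using e by (auto simp: g_def intro!: powr_mono2)
    show "continuous_on {x..x + L} g"
      unfolding g_def using e by (intro continuous_on_powr' continuous_intros) auto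
  qed (use L e in \<open>auto simp: g_def\<close>)
  moreover note g_ends
  moreover have "\<phi>' (g t) = \<phi> t" if "t \<in> {x..x + L}" for t
    using that p by (simp add: \<phi>'_def g_def powr_powr)
  ultimately have "((\<lambda>t. (1 - e) * (\<phi> t * (t - x) powr (- e))) has_integral integral {0..L powr (1 - e)} \<phi>') {x..x + L}"
    by (subst (asm) has_integral_cong) (auto simp: g_def mult_ac)
  from has_integral_mult_right[OF this, of p]
  have "((\<lambda>t. \<phi> t * (t - x) powr (- e)) has_integral p * integral {0..L powr (1 - e)} \<phi>') {x..x + L}"
    using p(2) by (simp add: mult.assoc[symmetric] mult.commute[of p])
  then show ?thesis
    unfolding desingularised_right_integral_def \<phi>'_def p_def by simp
qed

lemma continuous_on_desingularised_right_integral: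
  fixes \<phi> :: "real \<Rightarrow> real"
  assumes e: "0 \<le> e" "e < 1" and \<phi>: "continuous_on UNIV \<phi>"
  shows "continuous_on UNIV (desingularised_right_integral L e \<phi>)"
proof -
  have "continuous_on (UNIV \<times> cbox 0 (L powr (1 - e))) (\<lambda>z. \<phi> (fst z + snd z powr (1 / (1 - e))))"
    by (rule continuous_on_compose2[OF \<phi>])
       (use e in \<open>auto intro!: continuous_intros continuous_on_powr' simp: cbox_interval\<close>)
  then have "continuous_on UNIV (\<lambda>x. integral (cbox 0 (L powr (1 - e))) (\<lambda>r. \<phi> (x + r powr (1 / (1 - e)))))"
    by (intro integral_continuous_on_param) (simp add: split_beta)
  then show ?thesis
    unfolding desingularised_right_integral_def cbox_interval
    by (rule continuous_on_divide[OF _ continuous_on_const]) (use e in auto)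
qed

lemma has_real_derivative_desingularised_right_integral:
  fixes \<phi> \<phi>' :: "real \<Rightarrow> real"
  assumes e: "0 \<le> e" "e < 1" and \<phi>: "\<And>x. (\<phi> has_real_derivative \<phi>' x) (at x)"
    and \<phi>': "continuous_on UNIV \<phi>'"
  shows "(desingularised_right_integral L e \<phi> has_real_derivative
          desingularised_right_integral L e \<phi>' x) (at x)"
proof -
  define p where "p = 1 / (1 - e)"
  have p: "p > 0" using e by (auto simp: p_def)
  define M where "M = L powr (1 - e)"
  have "((\<lambda>x. integral (cbox 0 M) (\<lambda>r. \<phi> (x + r powr p))) has_field_derivative
         integral (cbox 0 M) (\<lambda>r. \<phi>' (x + r powr p))) (at x within UNIV)"
  proof (rule leibniz_rule_field_derivative)
    fix x r :: real
    have "((\<lambda>x. \<phi> (x + r powr p)) has_real_derivative \<phi>' (x + r powr p) * 1) (at x)"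
      by (rule DERIV_chain2[OF \<phi>]) (auto intro!: derivative_eq_intros)
    then show "((\<lambda>x. \<phi> (x + r powr p)) has_field_derivative \<phi>' (x + r powr p)) (at x within UNIV)"
      by simp
  next
    fix y :: real
    have \<phi>_cont: "continuous_on UNIV \<phi>"
      using \<phi> by (intro DERIV_continuous_on[of _ _ \<phi>']) (auto intro: has_field_derivative_at_within)
    have "continuous_on (cbox 0 M) (\<lambda>r. y + r powr p)"
      using p by (auto intro!: continuous_intros continuous_on_powr')
    from continuous_on_compose2[OF \<phi>_cont this subset_UNIV]
    show "(\<lambda>r. \<phi> (y + r powr p)) integrable_on cbox 0 M"
      by (rule integrable_continuous)
  next
    have "continuous_on (UNIV \<times> cbox 0 M) (\<lambda>z. \<phi>' (fst z + snd z powr p))"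
      by (rule continuous_on_compose2[OF \<phi>'])
         (use p in \<open>auto intro!: continuous_intros continuous_on_powr' simp: cbox_interval\<close>)
    then show "continuous_on (UNIV \<times> cbox 0 M) (\<lambda>(x, r). \<phi>' (x + r powr p))"
      by (simp add: split_beta)
  qed auto
  from DERIV_cdivide[OF this, of "1 - e"] show ?thesis
    unfolding desingularised_right_integral_def p_def[symmetric] M_def[symmetric] cbox_interval
    by simp
qed

lemma right_frac_integral_eq_desingularised:
  fixes \<phi> :: "real \<Rightarrow> real"
  assumes x: "a \<le> x" "x \<le> b" and e: "0 \<le> e" "e < 1" and \<phi>: "continuous_on UNIV \<phi>"
    and vanish: "\<And>t. t \<ge> b \<Longrightarrow> \<phi> t = 0"
  shows "right_frac_integral b e \<phi> x = desingularised_right_integral (b - a) e \<phi> x"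
proof -
  have full: "((\<lambda>t. \<phi> t * (t - x) powr (- e)) has_integral desingularised_right_integral (b - a) e \<phi> x)
                {x..x + (b - a)}"
    by (rule has_integral_desingularised_right_integral) (use x e \<phi> in auto)
  have "right_frac_integral b e \<phi> x + integral {b..x + (b - a)} (\<lambda>t. \<phi> t * (t - x) powr (- e)) =
        integral {x..x + (b - a)} (\<lambda>t. \<phi> t * (t - x) powr (- e))"
    unfolding right_frac_integral_def
    by (rule Henstock_Kurzweil_Integration.integral_combine) (use x full in auto)
  moreover have "integral {b..x + (b - a)} (\<lambda>t. \<phi> t * (t - x) powr (- e)) = 0"
    by (subst integral_cong[where g="\<lambda>_. 0"]) (auto simp: vanish)
  ultimately show ?thesis
    using full by (simp add: integral_unique)
qed

lemma continuous_on_right_frac_integral: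
  fixes \<phi> :: "real \<Rightarrow> real"
  assumes e: "0 \<le> e" "e < 1" and \<phi>: "continuous_on UNIV \<phi>" and vanish: "\<And>t. t \<ge> b \<Longrightarrow> \<phi> t = 0"
  shows "continuous_on {a..b} (right_frac_integral b e \<phi>)"
  using continuous_on_subset[OF continuous_on_desingularised_right_integral[OF e \<phi>]]
  by (rule continuous_on_eq) (auto simp: right_frac_integral_eq_desingularised[where a=a and b=b, OF _ _ e \<phi> vanish])

lemma has_real_derivative_right_frac_integral:
  fixes \<phi> \<phi>' :: "real \<Rightarrow> real"
  assumes x: "a < x" "x < b" and e: "0 \<le> e" "e < 1"
    and \<phi>: "\<And>x. (\<phi> has_real_derivative \<phi>' x) (at x)" and \<phi>': "continuous_on UNIV \<phi>'"
    and vanish: "\<And>t. t \<ge> b \<Longrightarrow> \<phi> t = 0" and vanish': "\<And>t. t \<ge> b \<Longrightarrow> \<phi>' t = 0"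
  shows "(right_frac_integral b e \<phi> has_real_derivative right_frac_integral b e \<phi>' x) (at x)"
proof -
  have \<phi>_cont: "continuous_on UNIV \<phi>"
    using \<phi> by (intro DERIV_continuous_on[of _ _ \<phi>']) (auto intro: has_field_derivative_at_within)
  have "(right_frac_integral b e \<phi> has_real_derivative desingularised_right_integral (b - a) e \<phi>' x) (at x)"
    using has_real_derivative_desingularised_right_integral[OF e \<phi> \<phi>']
    by (rule has_field_derivative_transform_within_open[where S="{a<..<b}"])
       (use x right_frac_integral_eq_desingularised[where a=a and b=b, OF _ _ e \<phi>_cont vanish] in auto)
  then show ?thesis
    using right_frac_integral_eq_desingularised[where a=a and b=b, OF _ _ e \<phi>' vanish'] x by simp
qed

lemma scaled_point_in_interval:
  fixes a y p \<theta> :: real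
  assumes "a \<le> y" "0 < p" "\<theta> \<in> {0..1}"
  shows "y - (y - a) * \<theta> powr p \<in> {a..y}"
proof -
  have "\<theta> powr p \<le> 1" "0 \<le> \<theta> powr p"
    using assms by (auto intro!: powr_le1)
  then have "(y - a) * \<theta> powr p \<le> (y - a)" "0 \<le> (y - a) * \<theta> powr p"
    using assms(1) by (auto intro: mult_left_le)
  then show ?thesis by auto
qed

lemma has_real_derivative_normalised_distance_powr:
  fixes a y e \<xi> :: real
  assumes ay: "a < y" and \<xi>: "\<xi> < y"
  shows "((\<lambda>\<xi>. ((y - \<xi>) / (y - a)) powr (1 - e)) has_real_derivative
          - (1 - e) / (y - a) powr (1 - e) * (y - \<xi>) powr (- e)) (at \<xi>)"
proof -
  have "((\<lambda>\<xi>. (y - \<xi>) / (y - a)) has_real_derivative - 1 / (y - a)) (at \<xi>)"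
    by (rule DERIV_cdivide) (auto intro!: derivative_eq_intros)
  from DERIV_fun_powr[OF this, of "1 - e"]
  have "((\<lambda>\<xi>. ((y - \<xi>) / (y - a)) powr (1 - e)) has_real_derivative
          (1 - e) * ((y - \<xi>) / (y - a)) powr (1 - e - of_nat 1) * (- 1 / (y - a))) (at \<xi>)"
    using \<xi> ay by simp
  moreover have "(1 - e) * ((y - \<xi>) / (y - a)) powr (1 - e - of_nat 1) * (- 1 / (y - a)) =
                 - (1 - e) / (y - a) powr (1 - e) * (y - \<xi>) powr (- e)"
  proof -
    have quotient: "((y - \<xi>) / (y - a)) powr (1 - e - 1) = (y - \<xi>) powr (- e) / (y - a) powr (- e)"
      using \<xi> ay by (simp add: powr_divide)
    have scale: "(y - a) powr (1 - e) = (y - a) * (y - a) powr (- e)"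
      using ay by (simp add: powr_diff powr_minus divide_inverse)
    have "(1 - e) * ((y - \<xi>) powr (- e) / (y - a) powr (- e)) * (- 1 / (y - a)) =
          - (1 - e) / ((y - a) * (y - a) powr (- e)) * (y - \<xi>) powr (- e)"
      using ay by (simp add: field_simps)
    then show ?thesis
      unfolding of_nat_1 quotient scale .
  qed
  ultimately show ?thesis
    by (rule DERIV_cong)
qed

text \<open>The substitution \<open>\<theta> = ((y - \<xi>) / (y - a)) powr (1 - e)\<close> removes the singularity and moves
  the dependence on \<open>y\<close> from the bounds into a smooth integrand.\<close>

lemma left_frac_integral_eq_scaled:
  fixes f :: "real \<Rightarrow> real"
  assumes ay: "a \<le> y" and e: "0 \<le> e" "e < 1" and f: "continuous_on {a..y} f"
  shows "left_frac_integral a e f y =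
         (y - a) powr (1 - e) / (1 - e) * integral {0..1} (\<lambda>\<theta>. f (y - (y - a) * \<theta> powr (1 / (1 - e))))"
proof (cases "a = y")
  case False
  with ay have ay: "a < y" by simp
  define p where "p = 1 / (1 - e)"
  have p: "p > 0" "(1 - e) * p = 1" using e by (auto simp: p_def field_simps)
  define g where "g \<xi> = ((y - \<xi>) / (y - a)) powr (1 - e)" for \<xi>
  define g' where "g' \<xi> = - (1 - e) / (y - a) powr (1 - e) * (y - \<xi>) powr (- e)" for \<xi>
  define f\<theta> where "f\<theta> \<theta> = f (y - (y - a) * \<theta> powr p)" for \<theta>
  have f\<theta>_cont: "continuous_on {0..1} f\<theta>"
    unfolding f\<theta>_def
    by (rule continuous_on_compose2[OF f])
       (use p ay scaled_point_in_interval in \<open>auto intro!: continuous_intros continuous_on_powr'\<close>)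
  have g_range: "g ` {a..y} \<subseteq> {0..1}"
    using ay e by (auto simp: g_def intro!: powr_le1)
  have g_cont: "continuous_on {a..y} g"
    unfolding g_def using ay e by (intro continuous_on_powr' continuous_intros) auto
  have g_deriv: "(g has_real_derivative g' \<xi>) (at \<xi> within {a..y})" if "\<xi> \<in> {a..y} - {y}" for \<xi>
    using has_real_derivative_normalised_distance_powr[OF ay, of \<xi> e] that
    unfolding g_def[abs_def] g'_def by (auto intro: has_field_derivative_at_within)
  have "((\<lambda>\<xi>. g' \<xi> *\<^sub>R f\<theta> (g \<xi>)) has_integral integral {g a..g y} f\<theta> - integral {g y..g a} f\<theta>) {a..y}"
    by (rule has_integral_substitution_general[of "{y}", OF _ _ g_range f\<theta>_cont g_cont g_deriv])
       (use ay in auto)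
  moreover have "g a = 1" "g y = 0"
    using ay by (auto simp: g_def)
  moreover have "f\<theta> (g \<xi>) = f \<xi>" if "\<xi> \<in> {a..y}" for \<xi>
    using that ay p by (simp add: f\<theta>_def g_def powr_powr)
  ultimately have "((\<lambda>\<xi>. g' \<xi> * f \<xi>) has_integral - integral {0..1} f\<theta>) {a..y}"
    by (subst (asm) has_integral_cong) auto
  from has_integral_mult_right[OF this, of "- ((y - a) powr (1 - e) / (1 - e))"]
  have "((\<lambda>\<xi>. - ((y - a) powr (1 - e) / (1 - e)) * (g' \<xi> * f \<xi>)) has_integral
          (y - a) powr (1 - e) / (1 - e) * integral {0..1} f\<theta>) {a..y}"
    by simp
  moreover have "- ((y - a) powr (1 - e) / (1 - e)) * (g' \<xi> * f \<xi>) = f \<xi> * (y - \<xi>) powr (- e)" for \<xi>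
    unfolding g'_def using ay e by (simp add: field_simps)
  ultimately have "((\<lambda>\<xi>. f \<xi> * (y - \<xi>) powr (- e)) has_integral
                     (y - a) powr (1 - e) / (1 - e) * integral {0..1} f\<theta>) {a..y}"
    by simp
  then show ?thesis
    unfolding left_frac_integral_def f\<theta>_def p_def by (rule integral_unique)
qed (simp add: left_frac_integral_def)

lemma has_real_derivative_scaled_integral:
  fixes f f' :: "real \<Rightarrow> real"
  assumes p: "0 < p" and y: "y \<in> {a..b}"
    and f: "\<And>x. x \<in> {a..b} \<Longrightarrow> (f has_real_derivative f' x) (at x within {a..b})"
    and f': "continuous_on {a..b} f'"
  shows "((\<lambda>y. integral {0..1} (\<lambda>\<theta>. f (y - (y - a) * \<theta> powr p))) has_real_derivative
          integral {0..1} (\<lambda>\<theta>. f' (y - (y - a) * \<theta> powr p) * (1 - \<theta> powr p))) (at y within {a..b})"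
proof -
  define m where "m y \<theta> = y - (y - a) * \<theta> powr p" for y \<theta> :: real
  have m_in: "m y \<theta> \<in> {a..b}" if "y \<in> {a..b}" "\<theta> \<in> {0..1}" for y \<theta>
  proof -
    have "m y \<theta> \<in> {a..y}"
      unfolding m_def using scaled_point_in_interval p that by auto
    then show ?thesis using that by auto
  qed
  have m_cont: "continuous_on ({a..b} \<times> {0..1}) (\<lambda>z. m (fst z) (snd z))"
    unfolding m_def using p by (auto intro!: continuous_intros continuous_on_powr')
  have "((\<lambda>y. integral {0..1} (\<lambda>\<theta>. f (m y \<theta>))) has_real_derivative
          integral {0..1} (\<lambda>\<theta>. f' (m y \<theta>) * (1 - \<theta> powr p))) (at y within {a..b})"
  proof (rule leibniz_rule_field_derivative[where a="0::real" and b="1::real", unfolded cbox_interval])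
    fix x \<theta> :: real assume x: "x \<in> {a..b}" and \<theta>: "\<theta> \<in> {0..1}"
    have m_deriv: "((\<lambda>y. m y \<theta>) has_real_derivative 1 - \<theta> powr p) (at x within {a..b})"
      unfolding m_def by (auto intro!: derivative_eq_intros)
    have f_deriv: "(f has_real_derivative f' (m x \<theta>)) (at (m x \<theta>) within (\<lambda>y. m y \<theta>) ` {a..b})"
      by (rule DERIV_subset[OF f[OF m_in[OF x \<theta>]]]) (use m_in \<theta> in auto)
    show "((\<lambda>y. f (m y \<theta>)) has_real_derivative f' (m x \<theta>) * (1 - \<theta> powr p)) (at x within {a..b})"
      using DERIV_image_chain[OF f_deriv m_deriv] by (simp add: o_def)
  next
    fix x assume x: "x \<in> {a..b}"
    have f_cont: "continuous_on {a..b} f"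
      using f by (rule DERIV_continuous_on)
    show "(\<lambda>\<theta>. f (m x \<theta>)) integrable_on {0..1}"
      by (rule integrable_continuous_real, rule continuous_on_compose2[OF f_cont])
         (use x m_in p in \<open>auto simp: m_def intro!: continuous_intros continuous_on_powr'\<close>)
  next
    have "continuous_on ({a..b} \<times> {0..1}) (\<lambda>z. f' (m (fst z) (snd z)) * (1 - snd z powr p))"
      by (intro continuous_intros continuous_on_compose2[OF f' m_cont] continuous_on_powr')
         (use m_in p in auto)
    then show "continuous_on ({a..b} \<times> {0..1}) (\<lambda>(x, \<theta>). f' (m x \<theta>) * (1 - \<theta> powr p))"
      by (simp add: split_beta)
  qed (use y in auto)
  then show ?thesis
    by (simp add: m_def)
qed

lemma left_frac_integral_regular:
  fixes f :: "real \<Rightarrow> real"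
  assumes f: "C1_on_interval a b f" and e: "0 \<le> e" "e < 1"
  shows "continuous_on {a..b} (left_frac_integral a e f)"
    and "\<And>x. x \<in> {a<..<b} \<Longrightarrow> left_frac_integral a e f differentiable (at x)"
proof -
  obtain f' where f': "continuous_on {a..b} f'"
    and f_deriv: "\<And>x. x \<in> {a..b} \<Longrightarrow> (f has_real_derivative f' x) (at x within {a..b})"
    using f unfolding C1_on_interval_def by blast
  define p where "p = 1 / (1 - e)"
  have p: "0 < p" using e by (simp add: p_def)
  define J where "J y = integral {0..1} (\<lambda>\<theta>. f (y - (y - a) * \<theta> powr p))" for y
  have J_deriv: "\<exists>D. (J has_real_derivative D) (at y within {a..b})" if "y \<in> {a..b}" for y
    unfolding J_def using has_real_derivative_scaled_integral[OF p that f_deriv f'] by blast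
  have scaled: "left_frac_integral a e f y = (y - a) powr (1 - e) / (1 - e) * J y" if "y \<in> {a..b}" for y
    using that left_frac_integral_eq_scaled[OF _ e continuous_on_subset[OF DERIV_continuous_on[OF f_deriv]]]
    by (simp add: J_def p_def)
  have J_cont: "continuous_on {a..b} J"
    unfolding continuous_on_eq_continuous_within using J_deriv DERIV_continuous by blast
  have "continuous_on {a..b} (\<lambda>y. (y - a) powr (1 - e) / (1 - e) * J y)"
    using e by (intro continuous_intros continuous_on_powr' J_cont) auto
  then show "continuous_on {a..b} (left_frac_integral a e f)"
    by (rule continuous_on_eq) (simp add: scaled)
  fix x assume x: "x \<in> {a<..<b}"
  then obtain D where J_D: "(J has_real_derivative D) (at x)"
    using J_deriv[of x] by (auto simp: at_within_Icc_at)
  have "((\<lambda>y. y - a) has_real_derivative 1) (at x)"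
    by (auto intro!: derivative_eq_intros)
  then have "((\<lambda>y. (y - a) powr (1 - e)) has_real_derivative (1 - e) * (x - a) powr (1 - e - of_nat 1) * 1) (at x)"
    by (rule DERIV_fun_powr) (use x in auto)
  from DERIV_mult[OF DERIV_cdivide[OF this, of "1 - e"] J_D]
  have "(left_frac_integral a e f has_real_derivative
          (1 - e) * (x - a) powr (1 - e - of_nat 1) * 1 / (1 - e) * J x + D * ((x - a) powr (1 - e) / (1 - e))) (at x)"
  proof (rule has_field_derivative_transform_within_open[where S="{a<..<b}"])
    show "(\<lambda>y. (y - a) powr (1 - e) / (1 - e) * J y) y = left_frac_integral a e f y" if "y \<in> {a<..<b}" for y
      using that scaled[of y] by simp
  qed (use x in auto)
  then show "left_frac_integral a e f differentiable (at x)"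
    unfolding real_differentiable_def ..
qed

section \<open>Integration by parts\<close>

lemma integral_by_parts_zero_boundary:
  fixes f f' g g' :: "real \<Rightarrow> real"
  assumes ab: "a \<le> b" and f: "continuous_on {a..b} f" and g: "continuous_on {a..b} g"
    and f': "\<And>x. x \<in> {a<..<b} \<Longrightarrow> (f has_real_derivative f' x) (at x)"
    and g': "\<And>x. x \<in> {a<..<b} \<Longrightarrow> (g has_real_derivative g' x) (at x)"
    and g'_cont: "continuous_on {a..b} g'"
    and boundary: "f a * g a = 0" "f b * g b = 0"
  shows "integral {a..b} (\<lambda>x. f' x * g x) = - integral {a..b} (\<lambda>x. f x * g' x)"
proof -
  have "((\<lambda>x. f x * g' x) has_integral integral {a..b} (\<lambda>x. f x * g' x)) {a..b}"
    by (intro integrable_integral integrable_continuous_real continuous_intros f g'_cont)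
  then have "((\<lambda>x. f' x * g x) has_integral - integral {a..b} (\<lambda>x. f x * g' x)) {a..b}"
    using f' g' boundary
    by (intro integration_by_parts_interior[OF bounded_bilinear_mult ab f g])
       (auto simp: has_real_derivative_iff_has_vector_derivative simp del: mult_eq_0_iff)
  then show ?thesis
    by (rule integral_unique)
qed

lemma right_frac_integral_of_deriv:
  fixes \<psi> \<psi>' :: "real \<Rightarrow> real"
  assumes \<gamma>: "0 \<le> \<gamma>" "\<gamma> < 1"
    and \<psi>: "\<And>x. (\<psi> has_real_derivative \<psi>' x) (at x)" and \<psi>': "continuous_on UNIV \<psi>'"
    and \<psi>_b: "\<psi> b = 0"
  shows "right_frac_integral b (\<gamma> - 1) \<psi>' s = - (1 - \<gamma>) * right_frac_integral b \<gamma> \<psi> s"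
proof (cases "s \<le> b")
  case True
  have \<psi>_cont: "continuous_on UNIV \<psi>"
    using \<psi> by (intro DERIV_continuous_on[of _ _ \<psi>']) (auto intro: has_field_derivative_at_within)
  define F where "F \<eta> = \<psi> \<eta> * (\<eta> - s) powr (1 - \<gamma>)" for \<eta>
  have sum: "((\<lambda>\<eta>. \<psi>' \<eta> * (\<eta> - s) powr (1 - \<gamma>) + (1 - \<gamma>) * (\<psi> \<eta> * (\<eta> - s) powr (- \<gamma>))) has_integral F b - F s) {s..b}"
  proof (rule fundamental_theorem_of_calculus_interior[OF True])
    show "continuous_on {s..b} F"
      unfolding F_def using \<gamma>
      by (intro continuous_intros continuous_on_powr' continuous_on_subset[OF \<psi>_cont]) auto
    fix x assume x: "x \<in> {s<..<b}"
    have "((\<lambda>\<eta>. \<eta> - s) has_real_derivative 1) (at x)"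
      by (auto intro!: derivative_eq_intros)
    then have "((\<lambda>\<eta>. (\<eta> - s) powr (1 - \<gamma>)) has_real_derivative (1 - \<gamma>) * (x - s) powr (1 - \<gamma> - of_nat 1) * 1) (at x)"
      by (rule DERIV_fun_powr) (use x in auto)
    from DERIV_mult[OF \<psi> this]
    show "(F has_vector_derivative \<psi>' x * (x - s) powr (1 - \<gamma>) + (1 - \<gamma>) * (\<psi> x * (x - s) powr (- \<gamma>))) (at x)"
      unfolding F_def by (simp add: has_real_derivative_iff_has_vector_derivative mult_ac)
  qed
  have F_ends: "F b - F s = 0"
    using \<psi>_b \<gamma> by (simp add: F_def)
  have kernel_term: "((\<lambda>\<eta>. (1 - \<gamma>) * (\<psi> \<eta> * (\<eta> - s) powr (- \<gamma>))) has_integral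
                   (1 - \<gamma>) * right_frac_integral b \<gamma> \<psi> s) {s..b}"
    unfolding right_frac_integral_def
    using set_borel_integral_eq_integral(1)[OF set_integrable_continuous_mult_powr_kernel[OF \<gamma> \<psi>_cont]]
    by (intro has_integral_mult_right integrable_integral)
  from has_integral_diff[OF sum kernel_term]
  have "((\<lambda>\<eta>. \<psi>' \<eta> * (\<eta> - s) powr (1 - \<gamma>)) has_integral - (1 - \<gamma>) * right_frac_integral b \<gamma> \<psi> s) {s..b}"
    unfolding F_ends by (simp add: algebra_simps)
  then show ?thesis
    unfolding right_frac_integral_def by (simp add: integral_unique)
qed (simp add: right_frac_integral_def)

lemma right_frac_integral_zero_of_deriv:
  fixes \<psi> \<psi>' :: "real \<Rightarrow> real"
  assumes s: "s \<le> b" and \<psi>: "\<And>x. (\<psi> has_real_derivative \<psi>' x) (at x)" and \<psi>_b: "\<psi> b = 0"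
  shows "right_frac_integral b 0 \<psi>' s = - \<psi> s"
proof -
  have "(\<psi>' has_integral \<psi> b - \<psi> s) {s..b}"
    using \<psi> by (intro fundamental_theorem_of_calculus[OF s])
       (auto simp: has_real_derivative_iff_has_vector_derivative[symmetric] intro: has_field_derivative_at_within)
  moreover have "integral {s..b} (\<lambda>\<eta>. \<psi>' \<eta> * (\<eta> - s) powr 0) = integral {s..b} \<psi>'"
    by (rule integral_spike[where S="{s}"]) auto
  ultimately show ?thesis
    using \<psi>_b by (simp add: right_frac_integral_def integral_unique)
qed

section \<open>Tempered fractional derivatives\<close>

lemma tfd_n_less_one: "0 \<le> e \<Longrightarrow> e < 1 \<Longrightarrow> tfd_n e = 1"
  unfolding tfd_n_def by (simp add: floor_eq_iff)

lemma tfd_n_one: "tfd_n 1 = 2"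
  unfolding tfd_n_def by simp

lemma left_tfd_eq_left_frac_integral:
  "left_tfd a e lam u x = exp (- lam * x) / Gamma (real (tfd_n e) - e) *
     (deriv ^^ tfd_n e) (left_frac_integral a (e - real (tfd_n e) + 1) (\<lambda>\<xi>. exp (lam * \<xi>) * u \<xi>)) x"
  unfolding left_tfd_def left_frac_integral_def Let_def by (simp only: powr_minus divide_inverse mult.assoc)

lemma right_tfd_eq_right_frac_integral:
  "right_tfd b e lam v x = (- 1) ^ tfd_n e * exp (lam * x) / Gamma (real (tfd_n e) - e) *
     (deriv ^^ tfd_n e) (right_frac_integral b (e - real (tfd_n e) + 1) (\<lambda>\<xi>. exp (- lam * \<xi>) * v \<xi>)) x"
  unfolding right_tfd_def right_frac_integral_def Let_def by (simp only: powr_minus divide_inverse mult.assoc)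

lemma deriv_funpow_eq_0:
  fixes g :: "real \<Rightarrow> real"
  assumes "open S" "\<And>x. x \<in> S \<Longrightarrow> g x = 0" "x \<in> S"
  shows "(deriv ^^ k) g x = 0"
  using assms(3)
proof (induction k arbitrary: x)
  case (Suc k)
  have "((deriv ^^ k) g has_real_derivative 0) (at x)"
    by (rule has_field_derivative_transform_within_open[OF DERIV_const assms(1) Suc.prems])
       (use Suc.IH in auto)
  then show ?case
    by (simp add: DERIV_imp_deriv)
qed (use assms(2) in simp)

lemma C1_on_interval_exp_mult:
  assumes "C1_on_interval a b u"
  shows "C1_on_interval a b (\<lambda>t. exp (lam * t) * u t)"
proof -
  obtain u' where u'_cont: "continuous_on {a..b} u'"
    and u_deriv: "\<And>x. x \<in> {a..b} \<Longrightarrow> (u has_real_derivative u' x) (at x within {a..b})"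
    using assms unfolding C1_on_interval_def by blast
  have "continuous_on {a..b} (\<lambda>t. exp (lam * t) * (lam * u t + u' t))"
    using DERIV_continuous_on[OF u_deriv] u'_cont by (intro continuous_intros)
  moreover have "((\<lambda>t. exp (lam * t) * u t) has_real_derivative exp (lam * x) * (lam * u x + u' x))
                   (at x within {a..b})" if "x \<in> {a..b}" for x
    using u_deriv[OF that] by (auto intro!: derivative_eq_intros simp: algebra_simps)
  ultimately show ?thesis
    unfolding C1_on_interval_def by blast
qed

locale tempered_frac_setting =
  fixes a b lam :: real and u v :: "real \<Rightarrow> real"
  assumes a_less_b: "a < b" and u_C1: "C1_on_interval a b u" and u_a: "u a = 0"
    and v_C0_inf: "C0_inf a b v"
begin

definition w :: "real \<Rightarrow> real" where
  "w = (\<lambda>t. exp (lam * t) * u t)"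

definition z :: "real \<Rightarrow> real" where
  "z = (\<lambda>t. exp (- lam * t) * v t)"

definition z' :: "real \<Rightarrow> real" where
  "z' t = exp (- lam * t) * (deriv v t - lam * v t)"

definition z'' :: "real \<Rightarrow> real" where
  "z'' t = exp (- lam * t) * (deriv (deriv v) t - 2 * lam * deriv v t + lam\<^sup>2 * v t)"

lemma w_C1: "C1_on_interval a b w"
  unfolding w_def using u_C1 by (rule C1_on_interval_exp_mult)

lemma w_a: "w a = 0"
  by (simp add: w_def u_a)

lemma w_cont: "continuous_on {a..b} w"
  using w_C1 unfolding C1_on_interval_def by (auto intro: DERIV_continuous_on)

lemma w_deriv:
  assumes x: "x \<in> {a<..<b}"
  shows "(w has_real_derivative deriv w x) (at x)"
proof -
  obtain w' where "\<And>x. x \<in> {a..b} \<Longrightarrow> (w has_real_derivative w' x) (at x within {a..b})"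
    using w_C1 unfolding C1_on_interval_def by blast
  then have "(w has_real_derivative w' x) (at x within {a..b})"
    using x by simp
  then have "(w has_real_derivative w' x) (at x)"
    using x by (simp add: at_within_Icc_at)
  then show ?thesis
    by (simp add: DERIV_imp_deriv)
qed

lemma v_derivs:
  shows v_deriv: "(v has_real_derivative deriv v x) (at x)"
    and v'_deriv: "(deriv v has_real_derivative deriv (deriv v) x) (at x)"
    and v''_cont: "continuous_on UNIV (deriv (deriv v))"
proof -
  have diff: "(deriv ^^ k) v differentiable (at x)" for k x
    using v_C0_inf unfolding C0_inf_def by blast
  show "(v has_real_derivative deriv v x) (at x)"
    using diff[of 0] by (simp add: DERIV_deriv_iff_real_differentiable)
  show "(deriv v has_real_derivative deriv (deriv v) x) (at x)"
    using diff[of 1] by (simp add: DERIV_deriv_iff_real_differentiable)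
  show "continuous_on UNIV (deriv (deriv v))"
    using diff[of 2] by (intro continuous_at_imp_continuous_on ballI differentiable_imp_continuous_within)
                        (simp add: numeral_2_eq_2)
qed

lemma v_vanish: "b \<le> t \<Longrightarrow> (deriv ^^ k) v t = 0"
proof -
  obtain d where "d < b" "\<And>x. d < x \<Longrightarrow> v x = 0"
    using v_C0_inf unfolding C0_inf_def by fastforce
  then show "b \<le> t \<Longrightarrow> (deriv ^^ k) v t = 0"
    by (intro deriv_funpow_eq_0[where S="{d<..}"]) auto
qed

lemma z_deriv: "(z has_real_derivative z' x) (at x)"
  unfolding z_def z'_def by (auto intro!: derivative_eq_intros v_deriv simp: algebra_simps)

lemma z'_deriv: "(z' has_real_derivative z'' x) (at x)"
  unfolding z'_def[abs_def] z''_def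
  by (auto intro!: derivative_eq_intros v_deriv v'_deriv simp: algebra_simps power2_eq_square)

lemma z''_cont: "continuous_on UNIV z''"
  unfolding z''_def[abs_def]
  using DERIV_continuous_on[OF v_deriv] DERIV_continuous_on[OF v'_deriv] v''_cont
  by (intro continuous_intros) auto

lemma z'_cont: "continuous_on S z'"
  using z'_deriv by (intro DERIV_continuous_on) (auto intro: has_field_derivative_at_within)

lemma z_cont: "continuous_on S z"
  using z_deriv by (intro DERIV_continuous_on) (auto intro: has_field_derivative_at_within)

lemma z_vanish: "b \<le> t \<Longrightarrow> z t = 0" and z'_vanish: "b \<le> t \<Longrightarrow> z' t = 0"
  and z''_vanish: "b \<le> t \<Longrightarrow> z'' t = 0"
  using v_vanish[of t 0] v_vanish[of t 1] v_vanish[of t 2]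
  by (simp_all add: z_def z'_def z''_def numeral_2_eq_2)

lemma left_frac_integral_w_deriv:
  assumes "0 \<le> e" "e < 1" "x \<in> {a<..<b}"
  shows "(left_frac_integral a e w has_real_derivative deriv (left_frac_integral a e w) x) (at x)"
  using left_frac_integral_regular(2)[OF w_C1 assms] by (simp add: DERIV_deriv_iff_real_differentiable)

lemma right_frac_integral_z_deriv:
  assumes "0 \<le> e" "e < 1" "x \<in> {a<..<b}"
  shows "(right_frac_integral b e z has_real_derivative right_frac_integral b e z' x) (at x)"
    and "(right_frac_integral b e z' has_real_derivative right_frac_integral b e z'' x) (at x)"
  using assms z_deriv z'_deriv z'_cont z''_cont z_vanish z'_vanish z''_vanish
  by (auto intro!: has_real_derivative_right_frac_integral[of a])

lemma integral_deriv_left_frac_integral_mult_z: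
  assumes \<gamma>: "0 \<le> \<gamma>" "\<gamma> < 1"
  shows "integral {a..b} (\<lambda>x. deriv (left_frac_integral a \<gamma> w) x * z x) =
         - integral {a..b} (\<lambda>s. w s * right_frac_integral b \<gamma> z' s)"
proof -
  have "integral {a..b} (\<lambda>x. deriv (left_frac_integral a \<gamma> w) x * z x) =
        - integral {a..b} (\<lambda>x. left_frac_integral a \<gamma> w x * z' x)"
    by (rule integral_by_parts_zero_boundary)
       (use a_less_b left_frac_integral_regular(1)[OF w_C1 \<gamma>] left_frac_integral_w_deriv[OF \<gamma>]
         z_cont z_deriv z'_cont z_vanish left_frac_integral_at_left in auto)
  also have "integral {a..b} (\<lambda>x. left_frac_integral a \<gamma> w x * z' x) =
             integral {a..b} (\<lambda>s. w s * right_frac_integral b \<gamma> z' s)"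
    using integral_mult_right_frac_integral_swap_continuous[OF \<gamma> _ w_cont z'_cont] a_less_b
    by (simp add: mult.commute)
  finally show ?thesis .
qed

lemma integral_deriv_w_mult_z:
  "integral {a..b} (\<lambda>x. deriv w x * z x) = - integral {a..b} (\<lambda>x. w x * z' x)"
  by (rule integral_by_parts_zero_boundary)
     (use a_less_b w_a w_cont w_deriv z_cont z_deriv z'_cont z_vanish in auto)

lemma integral_deriv_left_frac_integral_mult_deriv_right_frac_integral:
  assumes q: "0 \<le> q" "q < 1" and \<beta>: "0 \<le> \<beta>" "\<beta> < 1"
  shows "integral {a..b} (\<lambda>x. deriv (left_frac_integral a q w) x * deriv (right_frac_integral b \<beta> z) x) =
         - Beta (1 - q) (1 - \<beta>) * integral {a..b} (\<lambda>s. w s * right_frac_integral b (q + \<beta> - 1) z'' s)"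
proof -
  have "integral {a..b} (\<lambda>x. deriv (left_frac_integral a q w) x * deriv (right_frac_integral b \<beta> z) x) =
        integral {a..b} (\<lambda>x. deriv (left_frac_integral a q w) x * right_frac_integral b \<beta> z' x)"
    by (rule integral_spike[where S="{a, b}"])
       (auto simp: DERIV_imp_deriv[OF right_frac_integral_z_deriv(1)[OF \<beta>]])
  also have "\<dots> = - integral {a..b} (\<lambda>x. left_frac_integral a q w x * right_frac_integral b \<beta> z'' x)"
  proof (rule integral_by_parts_zero_boundary)
    show "left_frac_integral a q w a * right_frac_integral b \<beta> z' a = 0"
      "left_frac_integral a q w b * right_frac_integral b \<beta> z' b = 0"
      by (simp_all add: left_frac_integral_at_left right_frac_integral_at_right)
  qed (use a_less_b left_frac_integral_regular(1)[OF w_C1 q] left_frac_integral_w_deriv[OF q]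
         continuous_on_right_frac_integral[OF \<beta> z'_cont z'_vanish]
         continuous_on_right_frac_integral[OF \<beta> z''_cont z''_vanish]
         right_frac_integral_z_deriv(2)[OF \<beta>] in auto)
  also have "integral {a..b} (\<lambda>x. left_frac_integral a q w x * right_frac_integral b \<beta> z'' x) =
             integral {a..b} (\<lambda>s. w s * right_frac_integral b q (right_frac_integral b \<beta> z'') s)"
    using integral_mult_right_frac_integral_swap_continuous[OF q _ w_cont
            continuous_on_right_frac_integral[OF \<beta> z''_cont z''_vanish]] a_less_b
    by (simp add: mult.commute)
  also have "\<dots> = integral {a..b} (\<lambda>s. Beta (1 - q) (1 - \<beta>) * (w s * right_frac_integral b (q + \<beta> - 1) z'' s))"
    by (simp add: right_frac_integral_semigroup[OF q \<beta> z''_cont] mult.left_commute)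
  finally show ?thesis
    by simp
qed

lemma deriv_left_frac_integral_zero:
  assumes x: "x \<in> {a<..<b}"
  shows "deriv (left_frac_integral a 0 w) x = w x"
proof -
  have "left_frac_integral a 0 w = (\<lambda>y. integral {a..y} w)"
    unfolding left_frac_integral_def by (intro ext integral_spike[where S="{y}" for y]) auto
  moreover have "((\<lambda>y. integral {a..y} w) has_real_derivative w x) (at x)"
    using integral_has_real_derivative[OF w_cont, of x] x by (simp add: at_within_Icc_at)
  ultimately show ?thesis
    by (simp add: DERIV_imp_deriv)
qed

lemma deriv2_left_frac_integral_zero:
  assumes x: "x \<in> {a<..<b}"
  shows "deriv (deriv (left_frac_integral a 0 w)) x = deriv w x"
proof -
  have "(deriv (left_frac_integral a 0 w) has_real_derivative deriv w x) (at x)"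
    by (rule has_field_derivative_transform_within_open[OF w_deriv[OF x], where S="{a<..<b}"])
       (use x deriv_left_frac_integral_zero in auto)
  then show ?thesis
    by (rule DERIV_imp_deriv)
qed

lemma deriv2_right_frac_integral_zero:
  assumes x: "x \<in> {a<..<b}"
  shows "deriv (deriv (right_frac_integral b 0 z)) x = - z' x"
proof -
  have "right_frac_integral b 0 z = (\<lambda>y. integral {y..b} z)"
    unfolding right_frac_integral_def by (intro ext integral_spike[where S="{y}" for y]) auto
  moreover have "((\<lambda>y. integral {y..b} z) has_real_derivative - z y) (at y)" if "y \<in> {a<..<b}" for y
    using integral_has_real_derivative'[OF z_cont, where t=y and a=a and b=b] that
    by (simp add: at_within_Icc_at)
  ultimately have "deriv (right_frac_integral b 0 z) y = - z y" if "y \<in> {a<..<b}" for y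
    using that by (simp add: DERIV_imp_deriv)
  then have "(deriv (right_frac_integral b 0 z) has_real_derivative - z' x) (at x)"
    by (intro has_field_derivative_transform_within_open[OF DERIV_minus[OF z_deriv], where S="{a<..<b}"])
       (use x in auto)
  then show ?thesis
    by (rule DERIV_imp_deriv)
qed

lemma left_tfd_less_one:
  "0 \<le> e \<Longrightarrow> e < 1 \<Longrightarrow> left_tfd a e lam u x = exp (- lam * x) / Gamma (1 - e) * deriv (left_frac_integral a e w) x"
  using left_tfd_eq_left_frac_integral[of a e lam u x] by (simp add: tfd_n_less_one w_def)

lemma right_tfd_less_one:
  "0 \<le> e \<Longrightarrow> e < 1 \<Longrightarrow> right_tfd b e lam v x = - (exp (lam * x) / Gamma (1 - e) * deriv (right_frac_integral b e z) x)"
  using right_tfd_eq_right_frac_integral[of b e lam v x] by (simp add: tfd_n_less_one z_def)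

lemma left_tfd_one: "x \<in> {a<..<b} \<Longrightarrow> left_tfd a 1 lam u x = exp (- lam * x) * deriv w x"
  using left_tfd_eq_left_frac_integral[of a 1 lam u x] deriv2_left_frac_integral_zero
  by (simp add: tfd_n_one w_def numeral_2_eq_2)

lemma right_tfd_one: "x \<in> {a<..<b} \<Longrightarrow> right_tfd b 1 lam v x = - (exp (lam * x) * z' x)"
  using right_tfd_eq_right_frac_integral[of b 1 lam v x] deriv2_right_frac_integral_zero
  by (simp add: tfd_n_one z_def numeral_2_eq_2)

lemma L2_inner_left_tfd:
  assumes \<gamma>: "0 \<le> \<gamma>" "\<gamma> < 1"
  shows "L2_inner a b (left_tfd a \<gamma> lam u) v =
         - integral {a..b} (\<lambda>s. w s * right_frac_integral b \<gamma> z' s) / Gamma (1 - \<gamma>)"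
proof -
  have "left_tfd a \<gamma> lam u x * v x = deriv (left_frac_integral a \<gamma> w) x * z x / Gamma (1 - \<gamma>)" for x
    by (simp add: left_tfd_less_one[OF \<gamma>] z_def)
  then show ?thesis
    by (simp add: L2_inner_def integral_deriv_left_frac_integral_mult_z[OF \<gamma>])
qed

lemma L2_inner_left_tfd_one:
  "L2_inner a b (left_tfd a 1 lam u) v = - integral {a..b} (\<lambda>s. w s * z' s)"
proof -
  have "integral {a..b} (\<lambda>x. left_tfd a 1 lam u x * v x) = integral {a..b} (\<lambda>x. deriv w x * z x)"
    by (rule integral_spike[where S="{a, b}"]) (auto simp: left_tfd_one z_def)
  then show ?thesis
    by (simp add: L2_inner_def integral_deriv_w_mult_z)
qed

lemma L2_inner_left_right_tfd:
  assumes q: "0 \<le> q" "q < 1" and \<beta>: "0 \<le> \<beta>" "\<beta> < 1"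
  shows "L2_inner a b (left_tfd a q lam u) (right_tfd b \<beta> lam v) =
         Beta (1 - q) (1 - \<beta>) / (Gamma (1 - q) * Gamma (1 - \<beta>)) *
         integral {a..b} (\<lambda>s. w s * right_frac_integral b (q + \<beta> - 1) z'' s)"
proof -
  have "left_tfd a q lam u x * right_tfd b \<beta> lam v x =
        - (deriv (left_frac_integral a q w) x * deriv (right_frac_integral b \<beta> z) x) /
        (Gamma (1 - q) * Gamma (1 - \<beta>))" for x
    by (simp add: left_tfd_less_one[OF q] right_tfd_less_one[OF \<beta>] exp_minus field_simps)
  then show ?thesis
    by (simp add: L2_inner_def integral_deriv_left_frac_integral_mult_deriv_right_frac_integral[OF q \<beta>])
qed

lemma L2_inner_left_zero_right_one:
  "L2_inner a b (left_tfd a 0 lam u) (right_tfd b 1 lam v) = - integral {a..b} (\<lambda>s. w s * z' s)"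
proof -
  have "integral {a..b} (\<lambda>x. left_tfd a 0 lam u x * right_tfd b 1 lam v x) =
        integral {a..b} (\<lambda>x. - (w x * z' x))"
    by (rule integral_spike[where S="{a, b}"])
       (auto simp: left_tfd_less_one right_tfd_one deriv_left_frac_integral_zero exp_minus field_simps)
  then show ?thesis
    by (simp add: L2_inner_def)
qed

lemma L2_inner_tfd_swap_less_one:
  assumes q: "0 \<le> q" "q < \<gamma>" and \<gamma>: "\<gamma> < 1"
  shows "L2_inner a b (left_tfd a q lam u) (right_tfd b (\<gamma> - q) lam v) = L2_inner a b (left_tfd a \<gamma> lam u) v"
proof -
  define C where "C = Beta (1 - q) (1 - (\<gamma> - q)) / (Gamma (1 - q) * Gamma (1 - (\<gamma> - q)))"
  have C: "C * (1 - \<gamma>) = 1 / Gamma (1 - \<gamma>)"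
    using q \<gamma> by (simp add: C_def Beta_div_Gamma_Gamma Gamma_two_minus)
  have "right_frac_integral b (\<gamma> - 1) z'' s = - (1 - \<gamma>) * right_frac_integral b \<gamma> z' s" for s
    using right_frac_integral_of_deriv[OF _ \<gamma> z'_deriv z''_cont] z'_vanish q by simp
  then have kernel: "integral {a..b} (\<lambda>s. w s * right_frac_integral b (\<gamma> - 1) z'' s) =
                     - (1 - \<gamma>) * integral {a..b} (\<lambda>s. w s * right_frac_integral b \<gamma> z' s)"
    by (simp only: mult.left_commute[of "w _"] integral_mult_right)
  have "L2_inner a b (left_tfd a q lam u) (right_tfd b (\<gamma> - q) lam v) =
        C * integral {a..b} (\<lambda>s. w s * right_frac_integral b (\<gamma> - 1) z'' s)"
    using q \<gamma> by (simp add: C_def L2_inner_left_right_tfd)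
  also have "\<dots> = - (C * (1 - \<gamma>)) * integral {a..b} (\<lambda>s. w s * right_frac_integral b \<gamma> z' s)"
    unfolding kernel by (simp add: algebra_simps)
  also have "\<dots> = L2_inner a b (left_tfd a \<gamma> lam u) v"
    using q \<gamma> by (simp add: C L2_inner_left_tfd)
  finally show ?thesis .
qed

lemma L2_inner_tfd_swap_one:
  assumes q: "0 \<le> q" "q < 1"
  shows "L2_inner a b (left_tfd a q lam u) (right_tfd b (1 - q) lam v) = L2_inner a b (left_tfd a 1 lam u) v"
proof (cases "q = 0")
  case False
  have "Beta (1 - q) (1 - (1 - q)) / (Gamma (1 - q) * Gamma (1 - (1 - q))) = 1 / Gamma (2 - q - (1 - q))"
    using q False by (intro Beta_div_Gamma_Gamma) auto
  also have "\<dots> = 1"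
    by simp
  finally have C: "Beta (1 - q) (1 - (1 - q)) / (Gamma (1 - q) * Gamma (1 - (1 - q))) = 1" .
  have "L2_inner a b (left_tfd a q lam u) (right_tfd b (1 - q) lam v) =
        integral {a..b} (\<lambda>s. w s * right_frac_integral b 0 z'' s)"
    using L2_inner_left_right_tfd[of q "1 - q", unfolded C] q False by simp
  also have "\<dots> = integral {a..b} (\<lambda>s. - (w s * z' s))"
    using right_frac_integral_zero_of_deriv[OF _ z'_deriv z'_vanish[OF order_refl]]
    by (intro integral_cong) simp
  finally show ?thesis
    by (simp add: L2_inner_left_tfd_one)
qed (simp add: L2_inner_left_tfd_one L2_inner_left_zero_right_one)

end

theorem lemma5:
  fixes a b lam q \<gamma> :: real and u v :: "real \<Rightarrow> real"
  assumes "a < b" and "lam \<ge> 0" and "0 \<le> q" and "q < \<gamma>" and "\<gamma> \<le> 1"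
    and "C1_on_interval a b u" and "u a = 0"
    and "C0_inf a b v"
  shows "L2_inner a b (left_tfd a \<gamma> lam u) v =
         L2_inner a b (left_tfd a q lam u) (right_tfd b (\<gamma> - q) lam v)"
proof -
  interpret tempered_frac_setting a b lam u v
    using assms by unfold_locales
  show ?thesis
  proof (cases "\<gamma> < 1")
    case True
    then show ?thesis
      using assms by (simp add: L2_inner_tfd_swap_less_one)
  next
    case False
    then have "\<gamma> = 1"
      using assms by simp
    then show ?thesis
      using assms by (simp add: L2_inner_tfd_swap_one)
  qed
qed

end
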